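(* Fix $h = 2\pi^2$. For a positive integer $N_t$ put $T=\sqrt{N_t h/4}$ and define, for $x\in[0,1]$, $$r_t(x) = \frac{xh}{\pi} \sum_{j=1}^{N_t} \frac{1}{\sqrt{jh}} \cdot \frac{e^{\sqrt{jh}-\sqrt{N_t h/4}}}{e^{2\sqrt{jh}-2\sqrt{N_t h/4}} + x}.$$ Assume the following bound holds for all sufficiently large $N_t$: for every $x\in[e^{4-2T},1]$, $$\left|\int_\Gamma f(u,x)\,\delta(u)\,du\right| < 12\, e^{-T},$$ where $f$, $\delta$ and $\Gamma$ are as described in the context. Then, as $N_t\to\infty$, uniformly for $x\in[0,1]$, $$|r_t(x)-\sqrt{x}\,| < 20\, e^{-\sqrt{N_t h/4}} = 20\, e^{-\pi\sqrt{N_t/2}}.$$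
   Context: Here $\sqrt{u}$ denotes the principal branch of the square root. For $u\in\mathbb{C}$ and $x\in(0,1]$, $f(u,x) = \frac{x}{\pi}\,\frac{1}{\sqrt{u}}\,\frac{e^{\sqrt{u}-T}}{e^{2(\sqrt{u}-T)}+x}$. The function $\delta(u)=\mu(u)-m(u)$, where $\mu(u)=-\tfrac12$ if $\operatorname{Im}u\ge 0$ and $\mu(u)=\tfrac12$ if $\operatorname{Im}u<0$, and $m(u) = -\tfrac{i}{2}\cot(\pi u/h)$. The contour $\Gamma$ is the positively oriented boundary of the rectangle $\{u: 1\le \operatorname{Re}u\le 4T^2+1,\ |\operatorname{Im}u|\le a\}$ with $a = 2\pi(T+\tfrac12\log x)$. *)

theory Defs
  imports "HOL-Complex_Analysis.Complex_Analysis"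
begin

definition hh :: real where "hh = 2 * pi ^ 2"

definition Tt :: "nat \<Rightarrow> real" where "Tt N = sqrt (real N * hh / 4)"

definition r_t :: "nat \<Rightarrow> real \<Rightarrow> real" where
  "r_t N x = x * hh / pi * (\<Sum>j=1..N. 1 / sqrt (real j * hh) *
      exp (sqrt (real j * hh) - sqrt (real N * hh / 4)) /
      (exp (2 * sqrt (real j * hh) - 2 * sqrt (real N * hh / 4)) + x))"

definition f_fun :: "real \<Rightarrow> complex \<Rightarrow> real \<Rightarrow> complex" where
  "f_fun T u x = of_real x / of_real pi * (1 / csqrt u) *
      (exp (csqrt u - of_real T) / (exp (2 * (csqrt u - of_real T)) + of_real x))"

definition mu_fun :: "complex \<Rightarrow> complex" where
  "mu_fun u = (if Im u \<ge> 0 then - 1/2 else 1/2)"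

definition m_fun :: "complex \<Rightarrow> complex" where
  "m_fun u = - (\<i> / 2) * cot (of_real pi * u / of_real hh)"

definition delta_fun :: "complex \<Rightarrow> complex" where
  "delta_fun u = mu_fun u - m_fun u"

definition Gamma_path :: "real \<Rightarrow> real \<Rightarrow> real \<Rightarrow> complex" where
  "Gamma_path T x = (let a = 2 * pi * (T + ln x / 2) in
      rectpath (Complex 1 (- a)) (Complex (4 * T ^ 2 + 1) a))"

end

theory Submission
  imports Defs
begin

(* Write delta = (mu + 1/2) + delta_mero: mu + 1/2 is the indicator of the open lower half-plane
   and delta_mero = -1/2 + (i/2) cot (pi u / h) is meromorphic, with simple poles at the points j h.
   By the residue theorem, the integral of f * delta_mero over Gamma is 2 pi i times the residues
   at j h, 1 <= j <= N, which add up to -r_t(x) / (2 pi i), plus those at the two zeros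
   p_up, p_lo = (c +- i pi/2)^2, c = T + (log x)/2, of the denominator of f.  The integral of
   f * (mu + 1/2) over Gamma is the integral of f over the lower half of Gamma; the residue theorem
   on the lower half-rectangle turns it into 2 pi i Res (f, p_lo) plus the integral of f along
   [1, 4T^2 + 1], and the primitive (2 sqrt x / pi) arctan (e^(sqrt u - T) / sqrt x) shows that the
   latter is sqrt x + O(e^(-T)).  As |e^(2 pi i p / h)| = e^(-+c) and |e^(sqrt p - T)| = sqrt x, the
   terms coming from p_up and p_lo are O(e^(-T)) too; with explicit constants
   |r_t(x) - sqrt x| < (12 + 3 * 5/2) e^(-T).  For x < e^(4 - 2T), r_t(x) and sqrt x are both at
   most 8 e^(-T). *)

section \<open>Elementary estimates\<close>

lemma exp_ge_power4_div16:
  fixes s :: real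
  assumes "0 \<le> s"
  shows "s ^ 4 / 16 \<le> exp s"
proof -
  have "(1 + s/8) ^ 8 \<le> exp (s/8) ^ 8"
    using assms by (intro power_mono) (auto simp: exp_ge_add_one_self)
  also have "\<dots> = exp s" by (simp flip: exp_of_nat_mult)
  finally have exp_ge: "(1 + s/8) ^ 8 \<le> exp s" .
  have "s/2 \<le> (1 + s/8)^2"
    using zero_le_power2[of "1 - s/8"] by (simp add: power2_eq_square algebra_simps)
  then have "(s/2) ^ 4 \<le> ((1 + s/8)^2) ^ 4"
    using assms by (intro power_mono) auto
  then show ?thesis
    using exp_ge by (simp add: power_divide flip: power_mult)
qed

lemma sum_inverse_squares_le: "(\<Sum>j=1..n. 1 / (real j)\<^sup>2) \<le> pi\<^sup>2 / 6"
proof -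
  have "(\<Sum>j=1..n. 1 / (real j)\<^sup>2) = (\<Sum>k<n. 1 / (real k + 1)\<^sup>2)"
    by (rule sum.reindex_bij_witness[of _ Suc "\<lambda>j. j - 1"]) auto
  also have "\<dots> \<le> (\<Sum>k. 1 / (real k + 1)\<^sup>2)"
    using inverse_squares_sums by (intro sum_le_suminf) (auto simp: sums_iff add.commute)
  also have "\<dots> = pi\<^sup>2 / 6"
    using inverse_squares_sums by (simp add: sums_iff add.commute)
  finally show ?thesis .
qed

lemma exp_2_le_8: "exp (2::real) \<le> 8"
proof -
  have "exp (2::real) = exp 1 ^ 2" by (simp flip: exp_of_nat_mult)
  also have "\<dots> \<le> (272/100) ^ 2" using e_less_272 by (intro power_mono) auto
  also have "\<dots> \<le> 8" by (simp add: power_divide)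
  finally show ?thesis .
qed

lemma exp_4_le_24_pi: "exp (4::real) \<le> 24 * pi"
proof -
  have "exp (4::real) = exp 1 ^ 4" by (simp flip: exp_of_nat_mult)
  also have "\<dots> \<le> (272/100) ^ 4" using e_less_272 by (intro power_mono) auto
  also have "\<dots> \<le> 24 * 3" by (simp add: power_divide)
  also have "\<dots> \<le> 24 * pi" using pi_gt3 by simp
  finally show ?thesis .
qed

lemma abs_arctan_diff_minus_pi_half_le:
  fixes y0 y1 :: real
  assumes "0 < y0" "0 < y1"
  shows "\<bar>arctan y1 - arctan y0 - pi / 2\<bar> \<le> 1 / y1 + y0"
proof -
  have "arctan y1 - arctan y0 - pi / 2 = - (arctan (1 / y1) + arctan y0)"
    using arctan_inverse[of y1] assms by (simp add: inverse_eq_divide)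
  moreover have "0 \<le> arctan (1 / y1) + arctan y0"
    using assms by (intro add_nonneg_nonneg) auto
  moreover have "arctan (1 / y1) + arctan y0 \<le> 1 / y1 + y0"
    using assms by (intro add_mono arctan_le_self) auto
  ultimately show ?thesis by linarith
qed

lemma norm_divide_one_minus_le:
  fixes E :: "'a :: real_normed_field"
  assumes "norm E < 1"
  shows "norm (E / (1 - E)) \<le> norm E / (1 - norm E)"
proof -
  have "1 - norm E \<le> norm (1 - E)"
    using norm_triangle_ineq2[of 1 E] by simp
  then show ?thesis
    using assms by (simp add: norm_divide; intro frac_le) auto
qed

lemma norm_one_divide_one_minus_le:
  fixes E :: "'a :: real_normed_field"
  assumes "1 < norm E"
  shows "norm (1 / (1 - E)) \<le> 1 / (norm E - 1)"
proof -
  have "norm E - 1 \<le> norm (1 - E)"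
    using norm_triangle_ineq2[of E 1] by (simp add: norm_minus_commute)
  then show ?thesis
    using assms by (simp add: norm_divide; intro frac_le) auto
qed

lemma cot_exp_forms:
  fixes z :: complex
  assumes "sin z \<noteq> 0"
  shows "1 - exp (2 * \<i> * z) \<noteq> 0"
    and "- 1/2 + (\<i>/2) * cot z = exp (2 * \<i> * z) / (1 - exp (2 * \<i> * z))"
    and "1/2 + (\<i>/2) * cot z = 1 / (1 - exp (2 * \<i> * z))"
proof -
  define A where "A = exp (\<i> * z)"
  have A0: "A \<noteq> 0" by (simp add: A_def)
  have E: "exp (2 * \<i> * z) = A * A" by (simp add: A_def exp_add[symmetric] mult.assoc)
  have s: "sin z = (A - inverse A) / (2 * \<i>)" and c: "cos z = (A + inverse A) / 2"
    by (simp_all add: sin_exp_eq cos_exp_eq exp_minus A_def)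
  have "A - inverse A \<noteq> 0" using assms s by auto
  then have AA: "A * A - 1 \<noteq> 0" using A0 by (simp add: field_simps)
  then have AA': "1 - A * A \<noteq> 0" by (metis eq_iff_diff_eq_0)
  show "1 - exp (2 * \<i> * z) \<noteq> 0" using AA' E by simp
  have cot: "cot z = \<i> * (A * A + 1) / (A * A - 1)"
    unfolding cot_def s c using A0 AA by (simp add: field_simps)
  show "- 1/2 + (\<i>/2) * cot z = exp (2 * \<i> * z) / (1 - exp (2 * \<i> * z))"
    and "1/2 + (\<i>/2) * cot z = 1 / (1 - exp (2 * \<i> * z))"
    unfolding cot E using AA AA' by (simp_all add: field_simps; simp add: algebra_simps)+
qed

section \<open>Contour integrals over rectangles\<close>

lemma has_contour_integral_linepath_spike_start:
  assumes "(f has_contour_integral i) (linepath a b)"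
    and "\<And>z. z \<in> closed_segment a b \<Longrightarrow> z \<noteq> a \<Longrightarrow> g z = f z"
  shows "(g has_contour_integral i) (linepath a b)"
proof -
  have "((\<lambda>t. f (linepath a b t) * (b - a)) has_integral i) {0..1}"
    using assms(1) by (simp add: has_contour_integral_linepath)
  then have "((\<lambda>t. g (linepath a b t) * (b - a)) has_integral i) {0..1}"
  proof (rule has_integral_spike_finite[where S = "{0}", rotated 2])
    fix t :: real assume t: "t \<in> {0..1} - {0}"
    show "g (linepath a b t) * (b - a) = f (linepath a b t) * (b - a)"
    proof (cases "a = b")
      case False
      then have "linepath a b t \<noteq> a"
        using t by (auto simp: linepath_def algebra_simps)
      moreover have "linepath a b t \<in> closed_segment a b"
        using t by (metis DiffD1 linepath_in_path)
      ultimately show ?thesis using assms(2) by simp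
    qed simp
  qed simp
  then show ?thesis by (simp add: has_contour_integral_linepath)
qed

lemma has_contour_integral_linepath_spike_finish:
  assumes "(f has_contour_integral i) (linepath a b)"
    and "\<And>z. z \<in> closed_segment a b \<Longrightarrow> z \<noteq> b \<Longrightarrow> g z = f z"
  shows "(g has_contour_integral i) (linepath a b)"
proof -
  have "(g has_contour_integral (- i)) (linepath b a)"
    using has_contour_integral_reverse_linepath[OF assms(1)]
    by (rule has_contour_integral_linepath_spike_start) (use assms(2) in \<open>auto simp: closed_segment_commute\<close>)
  then show ?thesis
    using has_contour_integral_reverse_linepath by fastforce
qed

lemma contour_integral_rectpath_residues:
  assumes "Re a \<le> Re b" "Im a \<le> Im b"
    and S: "open S" "connected S" "cbox a b \<subseteq> S"
    and pts: "finite pts" "pts \<subseteq> box a b"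
    and f: "f holomorphic_on S - pts"
  shows "contour_integral (rectpath a b) f = 2 * pi * \<i> * (\<Sum>p\<in>pts. residue f p)"
proof -
  have path_image: "path_image (rectpath a b) = cbox a b - box a b"
    using assms(1,2) by (rule path_image_rectpath_cbox_minus_box)
  have "contour_integral (rectpath a b) f
      = 2 * pi * \<i> * (\<Sum>p\<in>pts. winding_number (rectpath a b) p * residue f p)"
  proof (rule Residue_theorem[OF S(1,2) pts(1) f])
    show "path_image (rectpath a b) \<subseteq> S - pts"
      using path_image S(3) pts(2) by auto
    show "\<forall>z. z \<notin> S \<longrightarrow> winding_number (rectpath a b) z = 0"
      using assms(1,2) S(3) by (auto intro!: winding_number_rectpath_outside)
  qed auto
  also have "(\<Sum>p\<in>pts. winding_number (rectpath a b) p * residue f p) = (\<Sum>p\<in>pts. residue f p)"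
    using pts(2) by (intro sum.cong) (auto simp: winding_number_rectpath)
  finally show ?thesis .
qed

lemma rectpath_edge_integrals:
  assumes F: "continuous_on (path_image (rectpath z1 z3)) F"
  obtains e1 e2 e3 e4
  where "(F has_contour_integral e1) (linepath z1 (Complex (Re z3) (Im z1)))"
    and "(F has_contour_integral e2) (linepath (Complex (Re z3) (Im z1)) z3)"
    and "(F has_contour_integral e3) (linepath z3 (Complex (Re z1) (Im z3)))"
    and "(F has_contour_integral e4) (linepath (Complex (Re z1) (Im z3)) z1)"
    and "contour_integral (rectpath z1 z3) F = e1 + (e2 + (e3 + e4))"
proof -
  define z2 z4 where "z2 = Complex (Re z3) (Im z1)" and "z4 = Complex (Re z1) (Im z3)"
  have R: "rectpath z1 z3 = linepath z1 z2 +++ linepath z2 z3 +++ linepath z3 z4 +++ linepath z4 z1"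
    unfolding rectpath_def Let_def z2_def z4_def ..
  have edge: "(F has_contour_integral contour_integral (linepath z w) F) (linepath z w)"
    if "closed_segment z w \<subseteq> path_image (rectpath z1 z3)" for z w
    using continuous_on_subset[OF F that]
    by (intro has_contour_integral_integral contour_integrable_continuous_linepath)
  have h: "(F has_contour_integral contour_integral (linepath z1 z2) F) (linepath z1 z2)"
    "(F has_contour_integral contour_integral (linepath z2 z3) F) (linepath z2 z3)"
    "(F has_contour_integral contour_integral (linepath z3 z4) F) (linepath z3 z4)"
    "(F has_contour_integral contour_integral (linepath z4 z1) F) (linepath z4 z1)"
    by (intro edge; auto simp: R path_image_join)+
  moreover have "contour_integral (rectpath z1 z3) F = contour_integral (linepath z1 z2) F
      + (contour_integral (linepath z2 z3) F + (contour_integral (linepath z3 z4) F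
      + contour_integral (linepath z4 z1) F))"
    unfolding R by (intro contour_integral_unique has_contour_integral_join h valid_path_join) auto
  ultimately show ?thesis
    unfolding z2_def z4_def by (rule that)
qed

lemma has_contour_integral_vertical_lower_half:
  assumes "0 < a" "(F has_contour_integral e) (linepath (Complex s (- a)) (of_real s))"
  shows "((\<lambda>u. if Im u < 0 then F u else 0) has_contour_integral e)
    (linepath (Complex s (- a)) (Complex s a))"
proof -
  let ?G = "\<lambda>u. if Im u < 0 then F u else 0"
  have "(?G has_contour_integral e) (linepath (Complex s (- a)) (of_real s))"
  proof (rule has_contour_integral_linepath_spike_finish[OF assms(2)])
    fix z assume z: "z \<in> closed_segment (Complex s (- a)) (of_real s)" "z \<noteq> of_real s"
    then have "Re z = s" "Im z \<in> {- a..0}"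
      using assms(1) by (auto simp: closed_segment_same_Re closed_segment_eq_real_ivl)
    moreover from this have "Im z \<noteq> 0"
      using z(2) by (auto simp: complex_eq_iff)
    ultimately show "?G z = F z" by auto
  qed
  moreover have "(?G has_contour_integral 0) (linepath (of_real s) (Complex s a))"
  proof (rule has_contour_integral_eq[OF has_contour_integral_0])
    fix z assume "z \<in> path_image (linepath (of_real s) (Complex s a))"
    then have "0 \<le> Im z"
      using assms(1) by (auto simp: closed_segment_same_Re closed_segment_eq_real_ivl)
    then show "0 = ?G z" by simp
  qed
  ultimately have "(?G has_contour_integral (e + 0)) (linepath (Complex s (- a)) (Complex s a))"
    by (rule has_contour_integral_split[where k = "1/2"]) (auto simp: complex_eq_iff)
  then show ?thesis by simp
qed

lemma has_contour_integral_rectpath_lower_half: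
  fixes x0 x1 a :: real
  defines "L \<equiv> rectpath (Complex x0 (- a)) (of_real x1)"
  assumes "0 < a" and F: "continuous_on (path_image L) F"
  shows "((\<lambda>u. if Im u < 0 then F u else 0) has_contour_integral
      contour_integral L F + contour_integral (linepath (of_real x0) (of_real x1)) F)
    (rectpath (Complex x0 (- a)) (Complex x1 a))"
proof -
  let ?G = "\<lambda>u. if Im u < 0 then F u else 0"
  define sw se ne nw where "sw = Complex x0 (- a)" and "se = Complex x1 (- a)"
    and "ne = Complex x1 a" and "nw = Complex x0 a"
  define r0 r1 where "r0 = (of_real x0 :: complex)" and "r1 = (of_real x1 :: complex)"
  have corners: "Complex (Re r1) (Im sw) = se" "Complex (Re sw) (Im r1) = r0"
    unfolding sw_def se_def r0_def r1_def by (simp_all add: complex_eq_iff)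
  obtain e1 e2 e3 e4 where h: "(F has_contour_integral e1) (linepath sw se)"
    "(F has_contour_integral e2) (linepath se r1)" "(F has_contour_integral e3) (linepath r1 r0)"
    "(F has_contour_integral e4) (linepath r0 sw)" and L: "contour_integral L F = e1 + (e2 + (e3 + e4))"
    using rectpath_edge_integrals[OF F[unfolded L_def], folded sw_def r1_def, unfolded corners]
    unfolding L_def sw_def r1_def by blast
  have "contour_integral (linepath r0 r1) F = - e3"
    using has_contour_integral_reverse_linepath[OF h(3)] by (rule contour_integral_unique)
  moreover have "(?G has_contour_integral e1) (linepath sw se)"
    by (rule has_contour_integral_eq[OF h(1)]) (use \<open>0 < a\<close> in \<open>auto simp: sw_def se_def closed_segment_same_Im\<close>)
  moreover have "(?G has_contour_integral e2) (linepath se ne)"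
    using has_contour_integral_vertical_lower_half[OF \<open>0 < a\<close>, of F e2 x1] h(2)
    unfolding se_def ne_def r1_def by simp
  moreover have "(?G has_contour_integral 0) (linepath ne nw)"
    by (rule has_contour_integral_eq[OF has_contour_integral_0])
       (use \<open>0 < a\<close> in \<open>auto simp: ne_def nw_def closed_segment_same_Im\<close>)
  moreover have "(?G has_contour_integral - (- e4)) (linepath nw sw)"
    using has_contour_integral_vertical_lower_half[OF \<open>0 < a\<close>, of F "- e4" x0]
      has_contour_integral_reverse_linepath[OF h(4)]
    unfolding sw_def nw_def r0_def by (auto dest: has_contour_integral_reverse_linepath)
  ultimately have "(?G has_contour_integral e1 + (e2 + (0 + - (- e4)))) (rectpath sw ne)"
    unfolding rectpath_def Let_def sw_def ne_def se_def nw_def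
    by (intro has_contour_integral_join valid_path_join valid_path_linepath) auto
  then show ?thesis
    using \<open>contour_integral (linepath r0 r1) F = - e3\<close>
    unfolding L sw_def ne_def r0_def r1_def by (simp add: algebra_simps)
qed

section \<open>The meromorphic part of delta\<close>

lemma hh_gt_18: "18 < hh"
proof -
  have "3 * 3 < pi * pi" using pi_gt3 by (intro mult_strict_mono) auto
  then show ?thesis by (simp add: hh_def power2_eq_square)
qed

definition delta_mero :: "complex \<Rightarrow> complex" where
  "delta_mero u = - 1/2 - m_fun u"

lemma delta_fun_eq: "delta_fun u = (if Im u < 0 then 1 else 0) + delta_mero u"
  unfolding delta_fun_def delta_mero_def mu_fun_def by auto

lemma delta_mero_eq: "delta_mero u = - 1/2 + (\<i>/2) * cot (of_real pi * u / of_real hh)"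
  unfolding delta_mero_def m_fun_def by simp

lemma sin_pi_div_hh_eq_0_iff:
  fixes u :: complex
  shows "sin (of_real pi * u / of_real hh) = 0 \<longleftrightarrow> (\<exists>n::int. u = of_real (of_int n * hh))"
proof -
  have "of_real pi * u / of_real hh = of_real (of_int n * pi) \<longleftrightarrow> u = of_real (of_int n * hh)"
    for n :: int
  proof -
    have "(of_real hh :: complex) \<noteq> 0" using hh_gt_18 by simp
    then show ?thesis by (auto simp: field_simps)
  qed
  then show ?thesis by (simp add: sin_eq_0)
qed

lemma delta_mero_holomorphic:
  "delta_mero holomorphic_on {u. sin (of_real pi * u / of_real hh) \<noteq> 0}"
  unfolding delta_mero_eq[abs_def] cot_def by (auto intro!: holomorphic_intros)

lemma delta_mero_holomorphic_ball:
  assumes "1 < \<bar>Im p\<bar>"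
  shows "delta_mero holomorphic_on ball p 1"
proof (rule holomorphic_on_subset[OF delta_mero_holomorphic], safe)
  fix u assume "u \<in> ball p 1" "sin (of_real pi * u / of_real hh) = 0"
  then have "\<bar>Im p - Im u\<bar> < 1" "Im u = 0"
    using abs_Im_le_cmod[of "p - u"] by (auto simp: dist_norm sin_pi_div_hh_eq_0_iff)
  then show False using assms by simp
qed

lemma delta_mero_exp_forms:
  assumes "Im u \<noteq> 0"
  defines "E \<equiv> exp (2 * \<i> * (of_real pi * u / of_real hh))"
  shows "delta_mero u = E / (1 - E)"
    and "delta_mero u + 1 = 1 / (1 - E)"
    and "norm E = exp (- 2 * pi * Im u / hh)"
proof -
  have "sin (of_real pi * u / of_real hh) \<noteq> 0"
    using assms(1) by (auto simp: sin_pi_div_hh_eq_0_iff)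
  from cot_exp_forms[OF this]
  show "delta_mero u = E / (1 - E)" and "delta_mero u + 1 = 1 / (1 - E)"
    unfolding delta_mero_eq E_def by (simp_all add: algebra_simps)
  show "norm E = exp (- 2 * pi * Im u / hh)"
    unfolding E_def by (simp add: norm_exp_eq_Re)
qed

lemma delta_mero_nonzero: "Im u \<noteq> 0 \<Longrightarrow> delta_mero u \<noteq> 0"
  using delta_mero_exp_forms(1,2)[of u] by auto

lemma norm_delta_mero_le:
  assumes "0 < Im u"
  shows "norm (delta_mero u) \<le> exp (- 2 * pi * Im u / hh) / (1 - exp (- 2 * pi * Im u / hh))"
proof -
  let ?E = "exp (2 * \<i> * (of_real pi * u / of_real hh))"
  have E: "delta_mero u = ?E / (1 - ?E)" "norm ?E = exp (- 2 * pi * Im u / hh)"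
    using assms delta_mero_exp_forms by auto
  have "exp (- 2 * pi * Im u / hh) < 1"
    using assms hh_gt_18 by (simp add: divide_neg_pos)
  then show ?thesis
    using norm_divide_one_minus_le[of ?E] unfolding E by simp
qed

lemma norm_delta_mero_add_one_le:
  assumes "Im u < 0"
  shows "norm (delta_mero u + 1) \<le> exp (2 * pi * Im u / hh) / (1 - exp (2 * pi * Im u / hh))"
proof -
  let ?E = "exp (2 * \<i> * (of_real pi * u / of_real hh))"
  have E: "delta_mero u + 1 = 1 / (1 - ?E)" "norm ?E = exp (- 2 * pi * Im u / hh)"
    using assms delta_mero_exp_forms by auto
  have gt1: "1 < exp (- 2 * pi * Im u / hh)"
    using assms hh_gt_18 by (simp add: divide_neg_pos mult_pos_neg)
  then have "norm (delta_mero u + 1) \<le> 1 / (exp (- 2 * pi * Im u / hh) - 1)"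
    using norm_one_divide_one_minus_le[of ?E] unfolding E by simp
  also have "\<dots> = exp (2 * pi * Im u / hh) / (1 - exp (2 * pi * Im u / hh))"
    using gt1 by (simp add: exp_minus field_simps)
  finally show ?thesis .
qed

lemma sin_pi_div_hh_nonzero_near_lattice:
  fixes u z0 :: complex
  assumes "z0 = of_real (of_int n * hh)" "u \<in> ball z0 1 - {z0}"
  shows "sin (of_real pi * u / of_real hh) \<noteq> 0"
proof
  assume "sin (of_real pi * u / of_real hh) = 0"
  then obtain m :: int where m: "u = of_real (of_int m * hh)"
    using sin_pi_div_hh_eq_0_iff by blast
  have "dist z0 u = norm (of_real (of_int (n - m) * hh) :: complex)"
    unfolding m assms(1) dist_norm by (simp add: left_diff_distrib)
  also have "\<dots> = \<bar>of_int (n - m)\<bar> * hh"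
    unfolding norm_of_real using hh_gt_18 by (simp add: abs_mult)
  finally have "\<bar>of_int (n - m)\<bar> * hh < 1"
    using assms(2) by simp
  moreover have "m \<noteq> n" using assms m by auto
  then have "1 \<le> \<bar>real_of_int (n - m)\<bar>"
    by (metis abs_zero of_int_1_le_iff of_int_abs right_minus_eq zero_less_abs_iff int_one_le_iff_zero_less)
  ultimately show False
    using mult_right_mono[of 1 "\<bar>real_of_int (n - m)\<bar>" hh] hh_gt_18 by linarith
qed

lemma residue_times_delta_mero:
  assumes F: "F holomorphic_on ball z0 1" "F z0 \<noteq> 0"
    and z0: "z0 = of_real (of_int n * hh)"
  shows "residue (\<lambda>u. F u * delta_mero u) z0 = F z0 * (\<i> * of_real hh / (2 * of_real pi))"
proof -
  let ?s = "\<lambda>u. sin (of_real pi * u / of_real hh)"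
  let ?c = "\<lambda>u. cos (of_real pi * u / of_real hh)"
  have hh: "(of_real hh :: complex) \<noteq> 0" using hh_gt_18 by simp
  have s_z0: "?s z0 = 0"
    using z0 sin_pi_div_hh_eq_0_iff by blast
  then have c_z0: "?c z0 \<noteq> 0"
    using sin_cos_squared_add[of "of_real pi * z0 / of_real hh"] by auto
  have "(\<lambda>u. F u * delta_mero u) = (\<lambda>u. - 1/2 * F u + F u * (\<i>/2) * ?c u / ?s u)"
    unfolding delta_mero_eq cot_def by (auto simp: algebra_simps)
  then have "residue (\<lambda>u. F u * delta_mero u) z0
      = residue (\<lambda>u. - 1/2 * F u) z0 + residue (\<lambda>u. F u * (\<i>/2) * ?c u / ?s u) z0"
    using sin_pi_div_hh_nonzero_near_lattice[OF z0] hh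
    by (elim ssubst, intro residue_add[of "ball z0 1"])
       (auto intro!: holomorphic_intros holomorphic_on_subset[OF F(1)])
  also have "residue (\<lambda>u. - 1/2 * F u) z0 = 0"
    by (rule residue_holo[of "ball z0 1"]) (auto intro!: holomorphic_intros F(1))
  also have "residue (\<lambda>u. F u * (\<i>/2) * ?c u / ?s u) z0
      = F z0 * (\<i>/2) * ?c z0 / (?c z0 * (of_real pi / of_real hh))"
    using F c_z0 s_z0 hh
    by (intro residue_simple_pole_deriv[where s = "ball z0 1"])
       (auto intro!: holomorphic_intros derivative_eq_intros)
  finally show ?thesis
    using c_z0 hh by (simp add: field_simps)
qed

section \<open>The function f\<close>

lemma f_fun_of_real:
  assumes "0 < t"
  shows "f_fun T (of_real t) x
    = of_real (x / pi * (1 / sqrt t) * (exp (sqrt t - T) / (exp (2 * (sqrt t - T)) + x)))"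
  using assms by (simp add: f_fun_def csqrt_of_real exp_of_real[symmetric] del: exp_of_real)

lemma r_t_eq_sum_f_fun:
  "of_real (r_t N x) = of_real hh * (\<Sum>j=1..N. f_fun (Tt N) (of_real (real j * hh)) x)"
proof -
  have "f_fun (Tt N) (of_real (real j * hh)) x
      = of_real (x / pi * (1 / sqrt (real j * hh) * exp (sqrt (real j * hh) - sqrt (real N * hh / 4))
          / (exp (2 * sqrt (real j * hh) - 2 * sqrt (real N * hh / 4)) + x)))"
    if "j \<in> {1..N}" for j
    using that hh_gt_18 by (subst f_fun_of_real) (auto simp: Tt_def algebra_simps)
  then show ?thesis
    unfolding r_t_def by (simp add: sum_distrib_left mult_ac)
qed

lemma f_fun_holomorphic:
  "(\<lambda>u. f_fun T u x) holomorphic_on {u. 0 < Re u \<and> exp (2 * (csqrt u - of_real T)) + of_real x \<noteq> 0}"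
proof -
  have "csqrt u \<noteq> 0" if "0 < Re u" for u
    using that by auto
  then show ?thesis
    unfolding f_fun_def by (auto intro!: holomorphic_intros simp: complex_nonpos_Reals_iff)
qed

lemma f_fun_den_eq_0_iff:
  assumes "0 < x"
  shows "exp (2 * (w - of_real T)) + of_real x = 0
    \<longleftrightarrow> (\<exists>n::int. w = Complex (T + ln x / 2) (pi * (of_int n + 1/2)))"
proof -
  have neg_x: "- of_real x = exp (of_real (ln x) + pi * \<i>)"
    using assms by (simp add: exp_add exp_of_real)
  have "exp (2 * (w - of_real T)) + of_real x = 0
      \<longleftrightarrow> exp (2 * (w - of_real T)) = exp (of_real (ln x) + pi * \<i>)"
    unfolding neg_x[symmetric] by (simp add: eq_neg_iff_add_eq_0)
  also have "\<dots> \<longleftrightarrow> (\<exists>n::int. 2 * (w - of_real T) = of_real (ln x) + pi * \<i> + of_int (2 * n) * pi * \<i>)"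
    by (rule exp_eq)
  also have "\<dots> \<longleftrightarrow> (\<exists>n::int. w = Complex (T + ln x / 2) (pi * (of_int n + 1/2)))"
  proof (intro ex_cong1)
    fix n :: int
    have solve: "2 * (w - of_real T) = Z \<longleftrightarrow> w = of_real T + Z / 2" for Z :: complex
      by (auto simp: field_simps)
    have "of_real T + (of_real (ln x) + pi * \<i> + of_int (2 * n) * pi * \<i>) / 2
        = Complex (T + ln x / 2) (pi * (of_int n + 1/2))"
      by (simp add: complex_eq_iff algebra_simps)
    then show "2 * (w - of_real T) = of_real (ln x) + pi * \<i> + of_int (2 * n) * pi * \<i>
        \<longleftrightarrow> w = Complex (T + ln x / 2) (pi * (of_int n + 1/2))"
      by (simp only: solve)
  qed
  finally show ?thesis .
qed

lemma ball_subset_Re_pos: "1 \<le> Re p \<Longrightarrow> ball p 1 \<subseteq> {u. 0 < Re u}"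
proof
  fix u assume "1 \<le> Re p" "u \<in> ball p 1"
  then show "u \<in> {u. 0 < Re u}"
    using abs_Re_le_cmod[of "p - u"] by (simp add: dist_norm)
qed

lemma residue_f_fun_times:
  assumes x: "0 < x" and p: "1 < Re p"
    and den: "exp (2 * (csqrt p - of_real T)) + of_real x = 0"
    and q: "q holomorphic_on ball p 1" "q p \<noteq> 0"
  shows "residue (\<lambda>u. f_fun T u x * q u) p = - exp (csqrt p - of_real T) * q p / of_real pi"
proof -
  define w where "w = csqrt p"
  have w: "w \<noteq> 0"
    using p unfolding w_def by auto
  have ball: "ball p 1 \<subseteq> {u. 0 < Re u}"
    using p by (intro ball_subset_Re_pos) simp
  have split: "(\<lambda>u. f_fun T u x * q u) = (\<lambda>u.
      (of_real x / of_real pi * (1 / csqrt u) * exp (csqrt u - of_real T) * q u)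
      / (exp (2 * (csqrt u - of_real T)) + of_real x))"
    unfolding f_fun_def by auto
  have "residue (\<lambda>u. f_fun T u x * q u) p
      = (of_real x / of_real pi * (1 / w) * exp (w - of_real T) * q p) / (- of_real x / w)"
    unfolding split w_def
  proof (rule residue_simple_pole_deriv[where s = "ball p 1"])
    have "csqrt u \<noteq> 0" if "u \<in> ball p 1" for u
    proof -
      have "0 < Re u" using ball that by auto
      then show ?thesis by auto
    qed
    then show "(\<lambda>u. of_real x / of_real pi * (1 / csqrt u) * exp (csqrt u - of_real T) * q u)
        holomorphic_on ball p 1"
      using ball by (auto intro!: holomorphic_intros q(1) simp: complex_nonpos_Reals_iff)
    show "(\<lambda>u. exp (2 * (csqrt u - of_real T)) + of_real x) holomorphic_on ball p 1"
      using ball by (auto intro!: holomorphic_intros simp: complex_nonpos_Reals_iff)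
    have "exp (2 * (csqrt p - of_real T)) = - of_real x"
      using den by (simp add: eq_neg_iff_add_eq_0)
    then show "((\<lambda>u. exp (2 * (csqrt u - of_real T)) + of_real x)
        has_field_derivative - of_real x / csqrt p) (at p)"
      using p w unfolding w_def
      by (auto intro!: derivative_eq_intros simp: complex_nonpos_Reals_iff)
  qed (use x w q p den in \<open>auto simp: w_def\<close>)
  also have "\<dots> = - exp (w - of_real T) * q p / of_real pi"
    using w x by (simp add: field_simps)
  finally show ?thesis unfolding w_def .
qed

definition f_primitive :: "real \<Rightarrow> real \<Rightarrow> complex \<Rightarrow> complex" where
  "f_primitive T x u = of_real (2 * sqrt x / pi) * Arctan (exp (csqrt u - of_real T) / of_real (sqrt x))"

lemma f_primitive_of_real:
  "0 < t \<Longrightarrow> f_primitive T x (of_real t) = of_real (2 * sqrt x / pi * arctan (exp (sqrt t - T) / sqrt x))"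
  unfolding f_primitive_def
  by (simp add: csqrt_of_real exp_of_real[symmetric] Arctan_of_real[symmetric] del: exp_of_real)

lemma has_field_derivative_f_primitive:
  assumes "0 < x" "0 < t"
  shows "(f_primitive T x has_field_derivative f_fun T (of_real t) x) (at (of_real t))"
proof -
  define E where "E = exp (sqrt t - T)"
  let ?D = "of_real (2 * sqrt x / pi) * (inverse (1 + (of_real (E / sqrt x))\<^sup>2)
      * (of_real E / (2 * of_real (sqrt t)) / of_real (sqrt x))) :: complex"
  have exp_diff_of_real: "exp (of_real a - of_real b) = (of_real (exp (a - b)) :: complex)" for a b
    by (metis exp_of_real of_real_diff)
  have "(f_primitive T x has_field_derivative ?D) (at (of_real t))"
    unfolding f_primitive_def E_def using assms
    by (auto intro!: derivative_eq_intros simp: complex_nonpos_Reals_iff csqrt_of_real exp_diff_of_real)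
  moreover have "?D = f_fun T (of_real t) x"
  proof -
    define d where "d = x + E\<^sup>2"
    have d: "exp (2 * (sqrt t - T)) + x = d"
      unfolding d_def E_def by (simp add: power2_eq_square flip: exp_add)
    have pos: "0 < d" "0 < sqrt x" "0 < sqrt t"
      using assms by (simp_all add: d_def add_pos_nonneg)
    have inv: "inverse (1 + (E / sqrt x)\<^sup>2) = x / d"
      using pos assms by (simp add: d_def power_divide field_simps)
    have "?D = of_real (2 * sqrt x / pi * (inverse (1 + (E / sqrt x)\<^sup>2) * (E / (2 * sqrt t) / sqrt x)))"
      by simp
    also have "\<dots> = of_real (x / pi * (1 / sqrt t) * (E / (exp (2 * (sqrt t - T)) + x)))"
    proof -
      have "2 * sqrt x / pi * (x / d * (E / (2 * sqrt t) / sqrt x)) = x / pi * (1 / sqrt t) * (E / d)"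
        using pos by (simp add: field_simps)
      then show ?thesis unfolding inv d by (rule arg_cong)
    qed
    also have "\<dots> = f_fun T (of_real t) x"
      using f_fun_of_real[OF assms(2)] unfolding E_def by simp
    finally show ?thesis .
  qed
  ultimately show ?thesis by simp
qed

lemma f_fun_has_contour_integral_real_segment:
  assumes "0 < x" "0 < s" "0 < t"
  shows "((\<lambda>u. f_fun T u x) has_contour_integral
      of_real (2 * sqrt x / pi * (arctan (exp (sqrt t - T) / sqrt x) - arctan (exp (sqrt s - T) / sqrt x))))
    (linepath (of_real s) (of_real t))"
proof -
  let ?S = "{u. 0 < Re u \<and> Im u = 0}" and ?g = "linepath (of_real s) (of_real t)"
  have "((\<lambda>u. f_fun T u x) has_contour_integral
      f_primitive T x (pathfinish ?g) - f_primitive T x (pathstart ?g)) ?g"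
  proof (rule contour_integral_primitive[where S = ?S])
    fix u assume "u \<in> ?S"
    then have "u = of_real (Re u)" "0 < Re u" by (auto simp: complex_eq_iff)
    then show "(f_primitive T x has_field_derivative f_fun T u x) (at u within ?S)"
      using has_field_derivative_f_primitive[OF assms(1), of "Re u" T]
      by (metis has_field_derivative_at_within)
  next
    show "path_image ?g \<subseteq> ?S"
      using assms by (auto simp: closed_segment_same_Im closed_segment_eq_real_ivl)
  qed auto
  then show ?thesis
    using assms by (simp add: f_primitive_of_real diff_divide_distrib algebra_simps)
qed

section \<open>Small x\<close>

lemma r_t_summand_le:
  assumes "1 \<le> j" "0 \<le> x"
  shows "1 / sqrt (real j * hh) * exp (sqrt (real j * hh) - T) / (exp (2 * sqrt (real j * hh) - 2 * T) + x)
    \<le> 4 * exp T / (hh\<^sup>2 * (real j)\<^sup>2)"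
proof -
  define s where "s = sqrt (real j * hh)"
  have "1 * 16 \<le> real j * hh"
    using assms(1) hh_gt_18 by (intro mult_mono) auto
  then have s: "4 \<le> s" "s\<^sup>2 = real j * hh"
    unfolding s_def using real_sqrt_le_mono[of 16 "real j * hh"] by auto
  have "exp (s - T) / (exp (2 * s - 2 * T) + x) \<le> exp (s - T) / exp (2 * s - 2 * T)"
    using assms(2) by (intro divide_left_mono mult_pos_pos add_pos_nonneg) auto
  also have "\<dots> = exp T / exp s"
    by (simp add: algebra_simps flip: exp_diff)
  also have "\<dots> \<le> exp T / (s ^ 4 / 16)"
    using exp_ge_power4_div16[of s] s by (intro divide_left_mono) auto
  finally have "1 / s * (exp (s - T) / (exp (2 * s - 2 * T) + x)) \<le> 1 / 4 * (exp T / (s ^ 4 / 16))"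
    using s assms(2) by (intro mult_mono) auto
  also have "s ^ 4 = (real j)\<^sup>2 * hh\<^sup>2"
  proof -
    have "s ^ 4 = (s\<^sup>2)\<^sup>2" by (simp flip: power_mult)
    then show ?thesis using s(2) by (simp add: power_mult_distrib)
  qed
  finally show ?thesis
    unfolding s_def by (simp add: field_simps)
qed

lemma r_t_nonneg: "0 \<le> x \<Longrightarrow> 0 \<le> r_t N x"
  unfolding r_t_def using hh_gt_18
  by (intro mult_nonneg_nonneg sum_nonneg divide_nonneg_nonneg add_nonneg_nonneg) auto

lemma r_t_le:
  assumes "0 \<le> x"
  shows "r_t N x \<le> x * exp (Tt N) / (3 * pi)"
proof -
  define T where "T = Tt N"
  have hh: "0 < hh" using hh_gt_18 by simp
  have "r_t N x = x * hh / pi * (\<Sum>j=1..N. 1 / sqrt (real j * hh) * exp (sqrt (real j * hh) - T)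
      / (exp (2 * sqrt (real j * hh) - 2 * T) + x))"
    unfolding r_t_def T_def Tt_def ..
  also have "\<dots> \<le> x * hh / pi * (\<Sum>j=1..N. 4 * exp T / (hh\<^sup>2 * (real j)\<^sup>2))"
    using assms hh by (intro mult_left_mono sum_mono r_t_summand_le) auto
  also have "(\<Sum>j=1..N. 4 * exp T / (hh\<^sup>2 * (real j)\<^sup>2)) = 4 * exp T / hh\<^sup>2 * (\<Sum>j=1..N. 1 / (real j)\<^sup>2)"
    by (simp add: sum_distrib_left)
  also have "x * hh / pi * (4 * exp T / hh\<^sup>2 * (\<Sum>j=1..N. 1 / (real j)\<^sup>2))
      \<le> x * hh / pi * (4 * exp T / hh\<^sup>2 * (pi\<^sup>2 / 6))"
    using assms hh by (intro mult_left_mono sum_inverse_squares_le) auto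
  also have "\<dots> = x * exp T / (3 * pi)"
    by (simp add: hh_def field_simps power2_eq_square)
  finally show ?thesis unfolding T_def .
qed

lemma r_t_le_small_x:
  assumes "0 \<le> x" "x \<le> exp (4 - 2 * Tt N)"
  shows "r_t N x \<le> 8 * exp (- Tt N)"
proof -
  define T where "T = Tt N"
  have "r_t N x \<le> x * exp T / (3 * pi)"
    using r_t_le[OF assms(1)] unfolding T_def .
  also have "\<dots> \<le> exp (4 - 2 * T) * exp T / (3 * pi)"
    using assms(2) unfolding T_def by (intro divide_right_mono mult_right_mono) auto
  also have "\<dots> = exp 4 / (3 * pi) * exp (- T)"
    by (simp add: field_simps flip: exp_add)
  also have "\<dots> \<le> 8 * exp (- T)"
    using exp_4_le_24_pi by (intro mult_right_mono) (auto simp: field_simps)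
  finally show ?thesis unfolding T_def .
qed

lemma sqrt_le_small_x:
  assumes "x \<le> exp (4 - 2 * Tt N)"
  shows "sqrt x \<le> 8 * exp (- Tt N)"
proof -
  define T where "T = Tt N"
  have "sqrt x \<le> sqrt (exp (4 - 2 * T))"
    using assms unfolding T_def by simp
  also have "sqrt (exp (4 - 2 * T)) = exp (2 - T)"
  proof -
    have "exp (4 - 2 * T) = (exp (2 - T))\<^sup>2" by (simp add: power2_eq_square flip: exp_add)
    then show ?thesis by simp
  qed
  also have "\<dots> = exp 2 * exp (- T)" by (simp flip: exp_add)
  also have "\<dots> \<le> 8 * exp (- T)"
    using exp_2_le_8 by (intro mult_right_mono) auto
  finally show ?thesis unfolding T_def .
qed

lemma abs_r_t_minus_sqrt_less_small_x:
  assumes "0 \<le> x" "x \<le> exp (4 - 2 * Tt N)"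
  shows "\<bar>r_t N x - sqrt x\<bar> < 20 * exp (- Tt N)"
  using r_t_le_small_x[OF assms] sqrt_le_small_x[OF assms(2)] r_t_nonneg[OF assms(1), where N = N]
    exp_gt_zero[of "- Tt N"] real_sqrt_ge_zero[OF assms(1)] by linarith

section \<open>Large x: the contour argument\<close>

locale large_x =
  fixes N :: nat and x :: real
  assumes x_ge: "exp (4 - 2 * Tt N) \<le> x" and x_le: "x \<le> 1"
begin

definition T :: real where "T = Tt N"

(* The zeros of the denominator of f nearest to the real axis are p_up and p_lo = (c +- i pi/2)^2. *)
definition c :: real where "c = T + ln x / 2"

definition a :: real where "a = 2 * pi * c"

definition B :: real where "B = 4 * T\<^sup>2 + 1"

definition w_up :: complex where "w_up = Complex c (pi / 2)"

definition w_lo :: complex where "w_lo = Complex c (- pi / 2)"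

definition p_up :: complex where "p_up = w_up\<^sup>2"

definition p_lo :: complex where "p_lo = w_lo\<^sup>2"

definition den :: "complex \<Rightarrow> complex" where
  "den u = exp (2 * (csqrt u - of_real T)) + of_real x"

definition f :: "complex \<Rightarrow> complex" where "f u = f_fun T u x"

definition g :: "complex \<Rightarrow> complex" where "g u = f u * delta_mero u"

definition lattice :: "complex set" where "lattice = (\<lambda>j. of_real (real j * hh)) ` {1..N}"

definition S :: "complex set" where
  "S = box (Complex (1/2) (- (a + 1))) (Complex (B + 1/2) (a + 1))"

lemma x_pos: "0 < x"
  using x_ge by (metis exp_gt_zero less_le_trans)

lemma T_ge_2: "2 \<le> T"
proof -
  have "exp (4 - 2 * T) \<le> 1" using x_ge x_le unfolding T_def by linarith
  then show ?thesis by simp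
qed

lemma c_ge_2: "2 \<le> c"
proof -
  have "4 - 2 * T \<le> ln x"
    using x_ge x_pos unfolding T_def by (metis ln_exp ln_le_cancel_iff exp_gt_zero)
  then show ?thesis unfolding c_def by simp
qed

lemma c_le_T: "c \<le> T"
  using x_le x_pos unfolding c_def by simp

lemma a_pos: "0 < a"
  using c_ge_2 unfolding a_def by simp

lemma one_lt_c_pi: "1 < c * pi"
proof -
  have "2 * 3 \<le> c * pi" using c_ge_2 pi_gt3 by (intro mult_mono) auto
  then show ?thesis by simp
qed

lemma B_eq: "B = real N * hh + 1"
  unfolding B_def T_def Tt_def using hh_gt_18 by simp

lemma exp_c_minus_T: "exp (c - T) = sqrt x"
proof -
  have "exp (c - T) = x powr (1/2)"
    using x_pos unfolding c_def by (simp add: powr_def)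
  then show ?thesis using x_pos by (simp add: powr_half_sqrt)
qed

lemma csqrt_p_up: "csqrt p_up = w_up"
  unfolding p_up_def w_up_def using c_ge_2 by (intro csqrt_square) simp

lemma csqrt_p_lo: "csqrt p_lo = w_lo"
  unfolding p_lo_def w_lo_def using c_ge_2 by (intro csqrt_square) simp

lemma p_up_eq: "p_up = Complex (c\<^sup>2 - pi\<^sup>2 / 4) (c * pi)"
  unfolding p_up_def w_up_def by (simp add: complex_eq_iff power2_eq_square)

lemma p_lo_eq: "p_lo = Complex (c\<^sup>2 - pi\<^sup>2 / 4) (- c * pi)"
  unfolding p_lo_def w_lo_def by (simp add: complex_eq_iff power2_eq_square)

lemma Re_poles_bounds: "1 < c\<^sup>2 - pi\<^sup>2 / 4" "c\<^sup>2 - pi\<^sup>2 / 4 < B"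
proof -
  have "pi * pi < 3.2 * 3.2" using pi_approx by (intro mult_strict_mono) auto
  moreover have "2 * 2 \<le> c * c" using c_ge_2 by (intro mult_mono) auto
  ultimately show "1 < c\<^sup>2 - pi\<^sup>2 / 4" by (simp add: power2_eq_square)
  have "c\<^sup>2 \<le> T\<^sup>2" using c_ge_2 c_le_T by (intro power_mono) auto
  moreover have "0 < pi\<^sup>2" "0 \<le> T\<^sup>2" by simp_all
  ultimately show "c\<^sup>2 - pi\<^sup>2 / 4 < B" unfolding B_def by linarith
qed

lemma poles_Re_Im: "1 < Re p_up" "1 < Re p_lo" "Im p_up = c * pi" "Im p_lo = - c * pi"
  using Re_poles_bounds by (simp_all add: p_up_eq p_lo_eq)

lemma den_eq_0_iff: "den u = 0 \<longleftrightarrow> (\<exists>n::int. csqrt u = Complex c (pi * (of_int n + 1/2)))"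
  unfolding den_def c_def using f_fun_den_eq_0_iff[OF x_pos] .

lemma den_eq_0_Im:
  assumes "den u = 0"
  obtains n :: int where "csqrt u = Complex c (pi * (of_int n + 1/2))"
    and "\<bar>Im u\<bar> = 2 * (c * pi) * \<bar>of_int n + 1/2\<bar>"
proof -
  obtain n :: int where n: "csqrt u = Complex c (pi * (of_int n + 1/2))"
    using assms den_eq_0_iff by blast
  have "Im u = Im ((csqrt u)\<^sup>2)" by simp
  also have "\<dots> = 2 * (c * pi) * (of_int n + 1/2)"
    unfolding n by (simp add: power2_eq_square)
  finally have "\<bar>Im u\<bar> = 2 * (c * pi) * \<bar>of_int n + 1/2\<bar>"
    using c_ge_2 by (simp add: abs_mult)
  then show ?thesis using n that by blast
qed

lemma c_pi_le_abs_Im_if_den_eq_0: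
  assumes "den u = 0"
  shows "c * pi \<le> \<bar>Im u\<bar>"
proof -
  obtain n :: int where n: "\<bar>Im u\<bar> = 2 * (c * pi) * \<bar>of_int n + 1/2\<bar>"
    using den_eq_0_Im[OF assms] by blast
  have "1/2 \<le> \<bar>of_int n + 1/2 :: real\<bar>" by (cases "0 \<le> n") auto
  then have "2 * (c * pi) * (1/2) \<le> 2 * (c * pi) * \<bar>of_int n + 1/2\<bar>"
    using one_lt_c_pi by (intro mult_left_mono) auto
  then show ?thesis unfolding n by simp
qed

lemma den_eq_0_in_S:
  assumes "u \<in> S" "den u = 0"
  shows "u = p_up \<or> u = p_lo"
proof -
  obtain n :: int where n: "csqrt u = Complex c (pi * (of_int n + 1/2))"
    and Im_u: "\<bar>Im u\<bar> = 2 * (c * pi) * \<bar>of_int n + 1/2\<bar>"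
    using den_eq_0_Im[OF assms(2)] by blast
  have "n = 0 \<or> n = -1"
  proof (rule ccontr)
    assume "\<not> (n = 0 \<or> n = -1)"
    then have "1 \<le> n \<or> n \<le> -2" by auto
    then have "3/2 \<le> \<bar>of_int n + 1/2 :: real\<bar>" by auto
    then have "2 * (c * pi) * (3/2) \<le> \<bar>Im u\<bar>"
      unfolding Im_u using one_lt_c_pi by (intro mult_left_mono) auto
    moreover have "\<bar>Im u\<bar> < 2 * (c * pi) + 1"
      using assms(1) unfolding S_def a_def by (auto simp: in_box_complex_iff algebra_simps)
    ultimately show False using one_lt_c_pi by linarith
  qed
  then have "csqrt u = w_up \<or> csqrt u = w_lo"
    using n unfolding w_up_def w_lo_def by (auto simp: complex_eq_iff)
  then show ?thesis
    unfolding p_up_def p_lo_def by (metis power2_csqrt)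
qed

lemma den_p_up: "den p_up = 0" and den_p_lo: "den p_lo = 0"
  unfolding den_eq_0_iff csqrt_p_up csqrt_p_lo w_up_def w_lo_def
  by (auto intro: exI[of _ 0] exI[of _ "-1"])

lemma f_holomorphic: "f holomorphic_on {u. 0 < Re u \<and> den u \<noteq> 0}"
  using f_fun_holomorphic unfolding f_def[abs_def] den_def .

lemma f_holomorphic_off_poles: "f holomorphic_on S - {p_up, p_lo}"
proof (rule holomorphic_on_subset[OF f_holomorphic], safe)
  fix u assume "u \<in> S" "u \<noteq> p_up" "u \<noteq> p_lo"
  then show "0 < Re u" and "den u = 0 \<Longrightarrow> False"
    using den_eq_0_in_S by (auto simp: S_def in_box_complex_iff)
qed

lemma residue_g_p_up: "residue g p_up = - exp (w_up - of_real T) * delta_mero p_up / of_real pi"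
  unfolding g_def[abs_def] f_def csqrt_p_up[symmetric]
  using den_p_up poles_Re_Im one_lt_c_pi unfolding den_def
  by (intro residue_f_fun_times x_pos delta_mero_holomorphic_ball delta_mero_nonzero) auto

lemma residue_g_p_lo: "residue g p_lo = - exp (w_lo - of_real T) * delta_mero p_lo / of_real pi"
  unfolding g_def[abs_def] f_def csqrt_p_lo[symmetric]
  using den_p_lo poles_Re_Im one_lt_c_pi unfolding den_def
  by (intro residue_f_fun_times x_pos delta_mero_holomorphic_ball delta_mero_nonzero) auto

lemma residue_f_p_lo: "residue f p_lo = - exp (w_lo - of_real T) / of_real pi"
  using residue_f_fun_times[OF x_pos poles_Re_Im(2) den_p_lo[unfolded den_def], of "\<lambda>_. 1"]
  unfolding f_def[abs_def] csqrt_p_lo by simp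

lemma lattice_bounds: "z \<in> lattice \<Longrightarrow> Im z = 0 \<and> 1 < Re z \<and> Re z < B"
proof -
  assume "z \<in> lattice"
  then obtain j where j: "j \<in> {1..N}" "z = of_real (real j * hh)" unfolding lattice_def by auto
  have "1 * hh \<le> real j * hh" "real j * hh \<le> real N * hh"
    using j hh_gt_18 by (intro mult_right_mono; simp)+
  moreover have "Re z = real j * hh" "Im z = 0" using j by simp_all
  ultimately show ?thesis using hh_gt_18 B_eq by (intro conjI) linarith+
qed

lemma residue_g_lattice:
  assumes j: "j \<in> {1..N}"
  defines "z \<equiv> of_real (real j * hh)"
  shows "residue g z = f z * (\<i> * of_real hh / (2 * of_real pi))"
  unfolding g_def[abs_def]
proof (rule residue_times_delta_mero)
  show "z = of_real (of_int (int j) * hh)" unfolding z_def by simp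
  have "z \<in> lattice" using j unfolding z_def lattice_def by blast
  then have z: "Im z = 0" "1 < Re z" using lattice_bounds by auto
  show "f holomorphic_on ball z 1"
  proof (rule holomorphic_on_subset[OF f_holomorphic], safe)
    fix u assume "u \<in> ball z 1"
    then have "\<bar>Re z - Re u\<bar> < 1" "\<bar>Im z - Im u\<bar> < 1"
      using abs_Re_le_cmod[of "z - u"] abs_Im_le_cmod[of "z - u"] by (auto simp: dist_norm)
    then show "0 < Re u" and "den u = 0 \<Longrightarrow> False"
      using z one_lt_c_pi c_pi_le_abs_Im_if_den_eq_0[of u] by auto
  qed
  have jh: "0 < real j * hh" using j hh_gt_18 by simp
  then have "0 < x / pi * (1 / sqrt (real j * hh))
      * (exp (sqrt (real j * hh) - T) / (exp (2 * (sqrt (real j * hh) - T)) + x))"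
    using x_pos by (intro mult_pos_pos divide_pos_pos add_pos_pos) auto
  then show "f z \<noteq> 0"
    unfolding f_def z_def f_fun_of_real[OF jh] by (metis of_real_eq_0_iff less_irrefl)
qed

lemma sin_eq_0_in_S:
  assumes "u \<in> S" "sin (of_real pi * u / of_real hh) = 0"
  shows "u \<in> lattice"
proof -
  obtain n :: int where u: "u = of_real (of_int n * hh)"
    using assms(2) sin_pi_div_hh_eq_0_iff by blast
  have "1/2 < of_int n * hh" "of_int n * hh < B + 1/2"
    using assms(1) unfolding u S_def by (auto simp: in_box_complex_iff)
  then have "0 * hh < of_int n * hh" "of_int n * hh < (real N + 1) * hh"
    using B_eq hh_gt_18 by (auto simp: algebra_simps)
  then have "0 < real_of_int n" "real_of_int n < real N + 1"
    using hh_gt_18 by (simp_all add: zero_less_mult_iff mult_less_cancel_right)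
  then have "1 \<le> n" "n \<le> int N" by linarith+
  then have "nat n \<in> {1..N}" "u = of_real (real (nat n) * hh)"
    using u by auto
  then show ?thesis unfolding lattice_def by blast
qed

lemma g_holomorphic: "g holomorphic_on S - ({p_up, p_lo} \<union> lattice)"
proof -
  have "S - ({p_up, p_lo} \<union> lattice) \<subseteq> {u. 0 < Re u \<and> den u \<noteq> 0}"
  proof
    fix u assume u: "u \<in> S - ({p_up, p_lo} \<union> lattice)"
    then have "0 < Re u" by (auto simp: S_def in_box_complex_iff)
    moreover have "den u \<noteq> 0" using u den_eq_0_in_S by blast
    ultimately show "u \<in> {u. 0 < Re u \<and> den u \<noteq> 0}" by simp
  qed
  then have "f holomorphic_on S - ({p_up, p_lo} \<union> lattice)"
    by (rule holomorphic_on_subset[OF f_holomorphic])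
  moreover have "delta_mero holomorphic_on S - ({p_up, p_lo} \<union> lattice)"
    using sin_eq_0_in_S by (intro holomorphic_on_subset[OF delta_mero_holomorphic]) auto
  ultimately show ?thesis
    unfolding g_def[abs_def] by (rule holomorphic_on_mult)
qed

lemma Gamma_path_eq: "Gamma_path (Tt N) x = rectpath (Complex 1 (- a)) (Complex B a)"
  unfolding Gamma_path_def Let_def a_def c_def B_def T_def ..

lemma B_gt_1: "1 < B"
  using T_ge_2 unfolding B_def by (simp add: add_pos_nonneg)

lemma S_open: "open S" and S_connected: "connected S"
  unfolding S_def by (auto intro: convex_connected)

lemma cbox_subset_S: "cbox (Complex 1 (- a)) (Complex B a) \<subseteq> S"
  unfolding S_def using a_pos by (auto simp: in_box_complex_iff in_cbox_complex_iff)

lemma poles_in_box: "{p_up, p_lo} \<union> lattice \<subseteq> box (Complex 1 (- a)) (Complex B a)"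
  using poles_Re_Im Re_poles_bounds lattice_bounds one_lt_c_pi a_pos
  unfolding a_def by (auto simp: in_box_complex_iff p_up_eq p_lo_eq)

lemma path_image_Gamma_subset:
  "path_image (rectpath (Complex 1 (- a)) (Complex B a)) \<subseteq> S - ({p_up, p_lo} \<union> lattice)"
  using B_gt_1 a_pos cbox_subset_S poles_in_box
  by (subst path_image_rectpath_cbox_minus_box) auto

lemma sum_residues_lattice: "2 * pi * \<i> * (\<Sum>p\<in>lattice. residue g p) = - of_real (r_t N x)"
proof -
  have "inj_on (\<lambda>j. complex_of_real (real j * hh)) {1..N}"
    using hh_gt_18 by (auto simp: inj_on_def)
  then have "(\<Sum>p\<in>lattice. residue g p) = (\<Sum>j=1..N. residue g (of_real (real j * hh)))"
    unfolding lattice_def by (rule sum.reindex[unfolded o_def])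
  also have "\<dots> = (\<Sum>j=1..N. f (of_real (real j * hh)) * (\<i> * of_real hh / (2 * of_real pi)))"
    by (intro sum.cong refl residue_g_lattice)
  also have "\<dots> = (\<Sum>j=1..N. f (of_real (real j * hh))) * (\<i> * of_real hh / (2 * of_real pi))"
    by (rule sum_distrib_right[symmetric])
  finally show ?thesis
    using r_t_eq_sum_f_fun[of N x] unfolding f_def T_def by (simp add: field_simps)
qed

lemma contour_integral_g:
  "contour_integral (rectpath (Complex 1 (- a)) (Complex B a)) g
    = 2 * pi * \<i> * (residue g p_up + residue g p_lo) - of_real (r_t N x)"
proof -
  have "contour_integral (rectpath (Complex 1 (- a)) (Complex B a)) g
      = 2 * pi * \<i> * (\<Sum>p\<in>{p_up, p_lo} \<union> lattice. residue g p)"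
    using B_gt_1 a_pos S_open S_connected cbox_subset_S poles_in_box g_holomorphic
    by (intro contour_integral_rectpath_residues) (auto simp: lattice_def)
  also have "(\<Sum>p\<in>{p_up, p_lo} \<union> lattice. residue g p)
      = residue g p_up + residue g p_lo + (\<Sum>p\<in>lattice. residue g p)"
  proof -
    have "p_up \<noteq> p_lo" "p_up \<notin> lattice" "p_lo \<notin> lattice"
      using poles_Re_Im one_lt_c_pi lattice_bounds by fastforce+
    then show ?thesis by (simp add: lattice_def add.assoc)
  qed
  finally show ?thesis
    using sum_residues_lattice by (simp add: algebra_simps)
qed

lemma lower_cbox_subset: "cbox (Complex 1 (- a)) (of_real B) \<subseteq> S - {p_up}"
  using cbox_subset_S a_pos poles_Re_Im one_lt_c_pi by (auto simp: in_cbox_complex_iff)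

lemma p_lo_in_lower_box: "p_lo \<in> box (Complex 1 (- a)) (of_real B)"
  using poles_Re_Im Re_poles_bounds c_ge_2 unfolding a_def by (auto simp: in_box_complex_iff p_lo_eq)

lemma contour_integral_f_lower_rectangle:
  "contour_integral (rectpath (Complex 1 (- a)) (of_real B)) f = 2 * pi * \<i> * residue f p_lo"
proof -
  have "f holomorphic_on S - {p_up} - {p_lo}"
    using f_holomorphic_off_poles unfolding Diff_insert2[of S p_up "{p_lo}"] .
  then show ?thesis
    using B_gt_1 a_pos S_open S_connected lower_cbox_subset p_lo_in_lower_box
    by (subst contour_integral_rectpath_residues[of _ _ "S - {p_up}"])
       (auto intro: connected_open_delete)
qed

lemma f_continuous_on_lower_boundary:
  "continuous_on (path_image (rectpath (Complex 1 (- a)) (of_real B))) f"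
proof -
  have "path_image (rectpath (Complex 1 (- a)) (of_real B)) \<subseteq> S - {p_up, p_lo}"
    using B_gt_1 a_pos lower_cbox_subset p_lo_in_lower_box
    by (subst path_image_rectpath_cbox_minus_box) auto
  then show ?thesis
    by (intro holomorphic_on_imp_continuous_on holomorphic_on_subset[OF f_holomorphic_off_poles])
qed

lemma has_contour_integral_f_delta:
  "((\<lambda>u. f u * delta_fun u) has_contour_integral
      2 * pi * \<i> * (residue g p_up + residue g p_lo + residue f p_lo) - of_real (r_t N x)
      + of_real (2 * sqrt x / pi * (arctan (exp (sqrt B - T) / sqrt x) - arctan (exp (1 - T) / sqrt x))))
    (rectpath (Complex 1 (- a)) (Complex B a))"
proof -
  let ?A = "2 * sqrt x / pi * (arctan (exp (sqrt B - T) / sqrt x) - arctan (exp (1 - T) / sqrt x))"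
  have "contour_integral (linepath (of_real 1) (of_real B)) f = of_real ?A"
    using f_fun_has_contour_integral_real_segment[OF x_pos, of 1 B T] B_gt_1
    unfolding f_def[abs_def] by (simp add: contour_integral_unique)
  then have "((\<lambda>u. if Im u < 0 then f u else 0) has_contour_integral
      2 * pi * \<i> * residue f p_lo + of_real ?A) (rectpath (Complex 1 (- a)) (Complex B a))"
    using has_contour_integral_rectpath_lower_half[OF a_pos f_continuous_on_lower_boundary]
    unfolding contour_integral_f_lower_rectangle by simp
  moreover have "(g has_contour_integral contour_integral (rectpath (Complex 1 (- a)) (Complex B a)) g)
      (rectpath (Complex 1 (- a)) (Complex B a))"
    using S_open path_image_Gamma_subset
    by (intro has_contour_integral_integral contour_integrable_holomorphic_simple[OF g_holomorphic]
        open_Diff finite_imp_closed) (auto simp: lattice_def)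
  ultimately have parts: "((\<lambda>u. (if Im u < 0 then f u else 0) + g u) has_contour_integral
      2 * pi * \<i> * residue f p_lo + of_real ?A + contour_integral (rectpath (Complex 1 (- a)) (Complex B a)) g)
      (rectpath (Complex 1 (- a)) (Complex B a))"
    by (rule has_contour_integral_add)
  have split: "(\<lambda>u. f u * delta_fun u) = (\<lambda>u. (if Im u < 0 then f u else 0) + g u)"
    unfolding g_def delta_fun_eq by (auto simp: fun_eq_iff distrib_left)
  have total: "2 * pi * \<i> * residue f p_lo + of_real ?A + contour_integral (rectpath (Complex 1 (- a)) (Complex B a)) g
      = 2 * pi * \<i> * (residue g p_up + residue g p_lo + residue f p_lo) - of_real (r_t N x) + of_real ?A"
    unfolding contour_integral_g by (simp add: algebra_simps)
  show ?thesis
    using parts unfolding split total .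
qed

lemma geometric_factor_le: "2 * sqrt x * (exp (- c) / (1 - exp (- c))) \<le> 5/2 * exp (- T)"
proof -
  have "5 \<le> exp (2::real)" using exp_lower_Taylor_quadratic[of 2] by simp
  have "exp (- c) \<le> exp (- 2)" using c_ge_2 by simp
  also have "\<dots> = 1 / exp 2" by (simp add: exp_minus inverse_eq_divide)
  also have "\<dots> \<le> 1/5" using \<open>5 \<le> exp 2\<close> by (intro divide_left_mono) auto
  finally have "exp (- c) \<le> 1/5" .
  have "exp (- T) = exp (c - T) * exp (- c)" by (simp flip: exp_add)
  then have "2 * sqrt x * (exp (- c) / (1 - exp (- c))) = 2 * exp (- T) / (1 - exp (- c))"
    unfolding exp_c_minus_T by simp
  also have "\<dots> \<le> 2 * exp (- T) / (4/5)"
    using \<open>exp (- c) \<le> 1/5\<close> c_ge_2 by (intro divide_left_mono) auto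
  finally show ?thesis by simp
qed

lemma two_pi_c_pi_div_hh: "2 * pi * (c * pi) / hh = c"
  by (simp add: hh_def power2_eq_square)

lemma norm_residue_g_p_up_le: "norm (2 * pi * \<i> * residue g p_up) \<le> 5/2 * exp (- T)"
proof -
  have "norm (2 * pi * \<i> * residue g p_up) = 2 * sqrt x * norm (delta_mero p_up)"
    unfolding residue_g_p_up by (simp add: norm_mult norm_divide w_up_def exp_c_minus_T)
  also have "\<dots> \<le> 2 * sqrt x * (exp (- c) / (1 - exp (- c)))"
    using norm_delta_mero_le[of p_up] poles_Re_Im one_lt_c_pi two_pi_c_pi_div_hh x_pos
    by (intro mult_left_mono) auto
  finally show ?thesis using geometric_factor_le by linarith
qed

lemma norm_residues_p_lo_le: "norm (2 * pi * \<i> * (residue g p_lo + residue f p_lo)) \<le> 5/2 * exp (- T)"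
proof -
  have "residue g p_lo + residue f p_lo = - exp (w_lo - of_real T) * (delta_mero p_lo + 1) / of_real pi"
    unfolding residue_g_p_lo residue_f_p_lo by (simp add: field_simps)
  then have "norm (2 * pi * \<i> * (residue g p_lo + residue f p_lo)) = 2 * sqrt x * norm (delta_mero p_lo + 1)"
    by (simp add: norm_mult norm_divide w_lo_def exp_c_minus_T)
  also have "\<dots> \<le> 2 * sqrt x * (exp (- c) / (1 - exp (- c)))"
    using norm_delta_mero_add_one_le[of p_lo] poles_Re_Im one_lt_c_pi two_pi_c_pi_div_hh x_pos
    by (intro mult_left_mono) auto
  finally show ?thesis using geometric_factor_le by linarith
qed

lemma real_segment_error_le:
  "\<bar>2 * sqrt x / pi * (arctan (exp (sqrt B - T) / sqrt x) - arctan (exp (1 - T) / sqrt x)) - sqrt x\<bar>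
    \<le> 5/2 * exp (- T)"
proof -
  define y0 y1 where "y0 = exp (1 - T) / sqrt x" and "y1 = exp (sqrt B - T) / sqrt x"
  have sx: "0 < sqrt x" using x_pos by simp
  have "(2 * T)\<^sup>2 \<le> B" unfolding B_def by (simp add: power_mult_distrib)
  then have "2 * T \<le> sqrt B" by (rule real_le_rsqrt)
  then have "x * exp (T - sqrt B) \<le> 1 * exp (- T)"
    using x_le x_pos by (intro mult_mono) auto
  moreover have "exp (1 - T) = exp 1 * exp (- T)" by (simp flip: exp_add)
  ultimately have sum_le: "x * exp (T - sqrt B) + exp (1 - T) \<le> (1 + exp 1) * exp (- T)"
    unfolding distrib_right by linarith
  have "2 * (1 + exp 1) \<le> 5/2 * pi"
    using e_less_272 pi_gt3 by simp
  then have const_le: "2 / pi * (1 + exp 1) \<le> 5/2"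
    by (simp add: field_simps)
  have "2 * sqrt x / pi * (arctan y1 - arctan y0) - sqrt x
      = 2 * sqrt x / pi * (arctan y1 - arctan y0 - pi / 2)"
    by (simp add: field_simps)
  then have "\<bar>2 * sqrt x / pi * (arctan y1 - arctan y0) - sqrt x\<bar>
      = 2 * sqrt x / pi * \<bar>arctan y1 - arctan y0 - pi / 2\<bar>"
    using sx by (simp add: abs_mult)
  also have "\<dots> \<le> 2 * sqrt x / pi * (1 / y1 + y0)"
    using sx abs_arctan_diff_minus_pi_half_le[of y0 y1] unfolding y0_def y1_def
    by (intro mult_left_mono) auto
  also have "\<dots> = 2 / pi * (x * exp (T - sqrt B) + exp (1 - T))"
    unfolding y0_def y1_def using sx x_pos by (simp add: field_simps exp_diff)
  also have "\<dots> \<le> 2 / pi * ((1 + exp 1) * exp (- T))"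
    using sum_le by (intro mult_left_mono) auto
  also have "\<dots> \<le> 5/2 * exp (- T)"
    using const_le by (simp only: mult.assoc[symmetric]) (intro mult_right_mono; simp)
  finally show ?thesis unfolding y0_def y1_def .
qed

lemma abs_r_t_minus_sqrt_less:
  assumes I: "((\<lambda>u. f_fun (Tt N) u x * delta_fun u) has_contour_integral I) (Gamma_path (Tt N) x)"
    and I_less: "norm I < 12 * exp (- Tt N)"
  shows "\<bar>r_t N x - sqrt x\<bar> < 20 * exp (- Tt N)"
proof -
  define R_up R_lo A where "R_up = 2 * pi * \<i> * residue g p_up"
    and "R_lo = 2 * pi * \<i> * (residue g p_lo + residue f p_lo)"
    and "A = 2 * sqrt x / pi * (arctan (exp (sqrt B - T) / sqrt x) - arctan (exp (1 - T) / sqrt x))"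
  have "(\<lambda>u. f_fun (Tt N) u x * delta_fun u) = (\<lambda>u. f u * delta_fun u)"
    unfolding f_def T_def ..
  then have "I = 2 * pi * \<i> * (residue g p_up + residue g p_lo + residue f p_lo) - of_real (r_t N x)
      + of_real A"
    using I has_contour_integral_f_delta unfolding Gamma_path_eq A_def
    by (auto intro: has_contour_integral_unique)
  then have "of_real (r_t N x - sqrt x) = R_up + R_lo + of_real (A - sqrt x) - I"
    unfolding R_up_def R_lo_def by (simp add: algebra_simps)
  then have "\<bar>r_t N x - sqrt x\<bar> = norm (R_up + R_lo + of_real (A - sqrt x) - I)"
    by (metis norm_of_real)
  also have "\<dots> \<le> norm R_up + norm R_lo + \<bar>A - sqrt x\<bar> + norm I"
    using norm_triangle_ineq4[of "R_up + R_lo + of_real (A - sqrt x)" I]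
      norm_triangle_ineq[of "R_up + R_lo" "of_real (A - sqrt x)"] norm_triangle_ineq[of R_up R_lo]
    unfolding norm_of_real by linarith
  also have "\<dots> < 5/2 * exp (- T) + 5/2 * exp (- T) + 5/2 * exp (- T) + 12 * exp (- T)"
    using norm_residue_g_p_up_le norm_residues_p_lo_le real_segment_error_le I_less
    unfolding R_up_def R_lo_def A_def T_def by linarith
  finally show ?thesis
    using exp_gt_zero[of "- T"] unfolding T_def by linarith
qed

end

lemma Tt_eq: "Tt N = pi * sqrt (real N / 2)"
proof -
  have "real N * hh / 4 = pi\<^sup>2 * (real N / 2)" by (simp add: hh_def)
  then have "Tt N = sqrt (pi\<^sup>2) * sqrt (real N / 2)"
    unfolding Tt_def by (simp only: real_sqrt_mult)
  then show ?thesis by simp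
qed

lemma abs_r_t_minus_sqrt_less_if_contour_bound:
  assumes contour_bound: "\<forall>x \<in> {exp (4 - 2 * Tt N)..1}.
      \<exists>I. ((\<lambda>u. f_fun (Tt N) u x * delta_fun u) has_contour_integral I) (Gamma_path (Tt N) x)
          \<and> norm I < 12 * exp (- Tt N)"
    and x: "x \<in> {0..1}"
  shows "\<bar>r_t N x - sqrt x\<bar> < 20 * exp (- Tt N)"
proof (cases "exp (4 - 2 * Tt N) \<le> x")
  case True
  then interpret large_x N x
    using x by unfold_locales auto
  obtain I where "((\<lambda>u. f_fun (Tt N) u x * delta_fun u) has_contour_integral I) (Gamma_path (Tt N) x)"
    and "norm I < 12 * exp (- Tt N)"
    using True x contour_bound by (meson atLeastAtMost_iff)
  then show ?thesis by (rule abs_r_t_minus_sqrt_less)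
next
  case False
  then show ?thesis
    using x abs_r_t_minus_sqrt_less_small_x by auto
qed

theorem theorem2p1:
  assumes "\<forall>\<^sub>F N in sequentially. \<forall>x \<in> {exp (4 - 2 * Tt N)..1}.
      \<exists>I. ((\<lambda>u. f_fun (Tt N) u x * delta_fun u) has_contour_integral I) (Gamma_path (Tt N) x)
          \<and> norm I < 12 * exp (- Tt N)"
  shows "\<forall>\<^sub>F N in sequentially. \<forall>x \<in> {0..1::real}.
      \<bar>r_t N x - sqrt x\<bar> < 20 * exp (- sqrt (real N * hh / 4))
      \<and> 20 * exp (- sqrt (real N * hh / 4)) = 20 * exp (- pi * sqrt (real N / 2))"
  using assms
  by (rule eventually_mono)
     (use abs_r_t_minus_sqrt_less_if_contour_bound in \<open>auto simp flip: Tt_def Tt_eq\<close>)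

end
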